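(* Let $U$ be a commutative supertropical semiring, $M:=eU$, and $\gamma:M\to N$ a surjective homomorphism onto a bipotent semiring $N$. Let $H=H(U,\gamma)$ be the relation on $U$ given by: $x_1\sim_H x_2$ iff $\gamma(ex_1)=\gamma(ex_2)$ and either $x_1=x_2$, or $x_1,x_2\in M\cup\Sigma_0(U,\gamma)$, or $\gamma(ex_1)=0$. Then $\pi_H:U\to U/H$ is the initial semiring homomorphism covering $\gamma$: $U/H$ (with the supertropical monoid structure making $\pi_H$ a transmission, its ghost ideal identified with $N$) is a supertropical semiring, $\pi_H$ is a semiring homomorphism covering $\gamma$, and for every supertropical semiring $W$ with $eW=N$ and every semiring homomorphism $\beta:U\to W$ covering $\gamma$ there is a unique semiring homomorphism $\eta:U/H\to W$ covering $\mathrm{id}_N$ with $\beta=\eta\circ\pi_H$.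
   Context: A supertropical monoid is a commutative monoid $(U,\cdot)$ with absorbing element $0$ and distinguished idempotent $e$ with $ex=0\Rightarrow x=0$, together with a total ordering on $M:=eU$, compatible with multiplication and with $0$ least, making $M$ a bipotent semiring (addition $=\max$). A supertropical semiring is a supertropical monoid for which the addition $x+y:=y$ if $ex<ey$, $x$ if $ex>ey$, $ex$ if $ex=ey$ is associative and distributive. $\mathcal T(U):=U\setminus eU$. A map $\alpha:U\to V$ covers $\gamma$ if it maps $eU$ to $eV$ and restricts there to $\gamma$. $\Sigma_0(U,\gamma):=\{x\in\mathcal T(U):\exists x_1\in M,\ x_1<ex,\ \gamma(x_1)=\gamma(ex)\neq0\}$. For a TE-relation $E$ (multiplicative equivalence relation, order compatible on $M$, with $ex\sim_E0\Rightarrow x\sim_E0$), $U/E$ carries the unique supertropical monoid structure making $\pi_E$ a transmission (a multiplicative map preserving $0,1,e$ and the order on ghosts). *)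

theory Defs
  imports Main
begin

record 'a stm =
  st_carrier :: "'a set"
  st_mul :: "'a \<Rightarrow> 'a \<Rightarrow> 'a"
  st_one :: 'a
  st_zero :: 'a
  st_e :: 'a
  st_le :: "'a \<Rightarrow> 'a \<Rightarrow> bool"

definition ghosts :: "('a, 'b) stm_scheme \<Rightarrow> 'a set" where
  "ghosts U = st_mul U (st_e U) ` st_carrier U"

definition supertropical_monoid :: "('a, 'b) stm_scheme \<Rightarrow> bool" where
  "supertropical_monoid U \<longleftrightarrow>
     (let C = st_carrier U; m = st_mul U; e = st_e U; le = st_le U; M = ghosts U in
       st_one U \<in> C \<and> st_zero U \<in> C \<and> e \<in> C \<and>
       (\<forall>x\<in>C. \<forall>y\<in>C. m x y \<in> C) \<and>
       (\<forall>x\<in>C. \<forall>y\<in>C. \<forall>z\<in>C. m (m x y) z = m x (m y z)) \<and>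
       (\<forall>x\<in>C. \<forall>y\<in>C. m x y = m y x) \<and>
       (\<forall>x\<in>C. m (st_one U) x = x) \<and>
       (\<forall>x\<in>C. m (st_zero U) x = st_zero U) \<and>
       m e e = e \<and>
       (\<forall>x\<in>C. m e x = st_zero U \<longrightarrow> x = st_zero U) \<and>
       (\<forall>x\<in>M. le x x) \<and>
       (\<forall>x\<in>M. \<forall>y\<in>M. le x y \<and> le y x \<longrightarrow> x = y) \<and>
       (\<forall>x\<in>M. \<forall>y\<in>M. \<forall>z\<in>M. le x y \<and> le y z \<longrightarrow> le x z) \<and>
       (\<forall>x\<in>M. \<forall>y\<in>M. le x y \<or> le y x) \<and>
       (\<forall>x\<in>M. \<forall>y\<in>M. \<forall>z\<in>M. le x y \<longrightarrow> le (m x z) (m y z)) \<and>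
       (\<forall>x\<in>M. le (st_zero U) x))"

definition st_add :: "('a, 'b) stm_scheme \<Rightarrow> 'a \<Rightarrow> 'a \<Rightarrow> 'a" where
  "st_add U x y =
     (let ex = st_mul U (st_e U) x; ey = st_mul U (st_e U) y in
       if ex = ey then ex else if st_le U ex ey then y else x)"

definition supertropical_semiring :: "('a, 'b) stm_scheme \<Rightarrow> bool" where
  "supertropical_semiring U \<longleftrightarrow> supertropical_monoid U \<and>
     (\<forall>x\<in>st_carrier U. \<forall>y\<in>st_carrier U. \<forall>z\<in>st_carrier U.
        st_add U (st_add U x y) z = st_add U x (st_add U y z)) \<and>
     (\<forall>x\<in>st_carrier U. \<forall>y\<in>st_carrier U. \<forall>z\<in>st_carrier U.
        st_mul U x (st_add U y z) = st_add U (st_mul U x y) (st_mul U x z))"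

definition st_semiring_hom :: "('a, 'b) stm_scheme \<Rightarrow> ('c, 'd) stm_scheme \<Rightarrow> ('a \<Rightarrow> 'c) \<Rightarrow> bool" where
  "st_semiring_hom U V f \<longleftrightarrow>
     (\<forall>x\<in>st_carrier U. f x \<in> st_carrier V) \<and>
     f (st_zero U) = st_zero V \<and> f (st_one U) = st_one V \<and>
     (\<forall>x\<in>st_carrier U. \<forall>y\<in>st_carrier U. f (st_mul U x y) = st_mul V (f x) (f y)) \<and>
     (\<forall>x\<in>st_carrier U. \<forall>y\<in>st_carrier U. f (st_add U x y) = st_add V (f x) (f y))"

definition covers :: "('a, 'b) stm_scheme \<Rightarrow> ('c, 'd) stm_scheme \<Rightarrow> ('a \<Rightarrow> 'c) \<Rightarrow> ('a \<Rightarrow> 'c) \<Rightarrow> bool" where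
  "covers U V f g \<longleftrightarrow> (\<forall>x\<in>ghosts U. f x \<in> ghosts V \<and> f x = g x)"

record 'a bsr =
  bs_carrier :: "'a set"
  bs_add :: "'a \<Rightarrow> 'a \<Rightarrow> 'a"
  bs_mul :: "'a \<Rightarrow> 'a \<Rightarrow> 'a"
  bs_zero :: 'a
  bs_one :: 'a

definition bipotent_semiring :: "('a, 'b) bsr_scheme \<Rightarrow> bool" where
  "bipotent_semiring N \<longleftrightarrow>
     (let C = bs_carrier N; a = bs_add N; m = bs_mul N; z = bs_zero N; u = bs_one N in
       z \<in> C \<and> u \<in> C \<and>
       (\<forall>x\<in>C. \<forall>y\<in>C. a x y \<in> C \<and> m x y \<in> C) \<and>
       (\<forall>x\<in>C. \<forall>y\<in>C. \<forall>w\<in>C. a (a x y) w = a x (a y w)) \<and>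
       (\<forall>x\<in>C. \<forall>y\<in>C. a x y = a y x) \<and>
       (\<forall>x\<in>C. a z x = x) \<and>
       (\<forall>x\<in>C. \<forall>y\<in>C. \<forall>w\<in>C. m (m x y) w = m x (m y w)) \<and>
       (\<forall>x\<in>C. m u x = x \<and> m x u = x) \<and>
       (\<forall>x\<in>C. m z x = z \<and> m x z = z) \<and>
       (\<forall>x\<in>C. \<forall>y\<in>C. \<forall>w\<in>C. m x (a y w) = a (m x y) (m x w) \<and> m (a y w) x = a (m y x) (m w x)) \<and>
       (\<forall>x\<in>C. \<forall>y\<in>C. a x y = x \<or> a x y = y))"

definition ghost_hom :: "('a, 'b) stm_scheme \<Rightarrow> ('n, 'c) bsr_scheme \<Rightarrow> ('a \<Rightarrow> 'n) \<Rightarrow> bool" where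
  "ghost_hom U N g \<longleftrightarrow>
     (\<forall>x\<in>ghosts U. g x \<in> bs_carrier N) \<and>
     g (st_zero U) = bs_zero N \<and> g (st_e U) = bs_one N \<and>
     (\<forall>x\<in>ghosts U. \<forall>y\<in>ghosts U. g (st_mul U x y) = bs_mul N (g x) (g y)) \<and>
     (\<forall>x\<in>ghosts U. \<forall>y\<in>ghosts U. g (st_add U x y) = bs_add N (g x) (g y))"

text \<open>eW = N, as bipotent semirings (literal identification).\<close>
definition ghost_ideal_is :: "('n, 'b) stm_scheme \<Rightarrow> ('n, 'c) bsr_scheme \<Rightarrow> bool" where
  "ghost_ideal_is W N \<longleftrightarrow>
     ghosts W = bs_carrier N \<and> st_zero W = bs_zero N \<and> st_e W = bs_one N \<and>
     (\<forall>a\<in>bs_carrier N. \<forall>b\<in>bs_carrier N.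
        st_mul W a b = bs_mul N a b \<and> st_add W a b = bs_add N a b)"

definition Sigma0 :: "('a, 'b) stm_scheme \<Rightarrow> ('n, 'c) bsr_scheme \<Rightarrow> ('a \<Rightarrow> 'n) \<Rightarrow> 'a set" where
  "Sigma0 U N g = {x \<in> st_carrier U - ghosts U.
     \<exists>x1\<in>ghosts U. st_le U x1 (st_mul U (st_e U) x) \<and> x1 \<noteq> st_mul U (st_e U) x \<and>
        g x1 = g (st_mul U (st_e U) x) \<and> g (st_mul U (st_e U) x) \<noteq> bs_zero N}"

definition Hrel :: "('a, 'b) stm_scheme \<Rightarrow> ('n, 'c) bsr_scheme \<Rightarrow> ('a \<Rightarrow> 'n) \<Rightarrow> 'a rel" where
  "Hrel U N g = {(x1, x2). x1 \<in> st_carrier U \<and> x2 \<in> st_carrier U \<and>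
     g (st_mul U (st_e U) x1) = g (st_mul U (st_e U) x2) \<and>
     (x1 = x2 \<or>
      (x1 \<in> ghosts U \<union> Sigma0 U N g \<and> x2 \<in> ghosts U \<union> Sigma0 U N g) \<or>
      g (st_mul U (st_e U) x1) = bs_zero N)}"

definition proj :: "'a rel \<Rightarrow> 'a \<Rightarrow> 'a set" where
  "proj E x = E `` {x}"

definition quot_stm :: "('a, 'b) stm_scheme \<Rightarrow> 'a rel \<Rightarrow> 'a set stm" where
  "quot_stm U E =
     \<lparr> st_carrier = st_carrier U // E,
       st_mul = (\<lambda>X Y. E `` {st_mul U (SOME x. x \<in> X) (SOME y. y \<in> Y)}),
       st_one = E `` {st_one U},
       st_zero = E `` {st_zero U},
       st_e = E `` {st_e U},
       st_le = (\<lambda>X Y. \<exists>x\<in>X. \<exists>y\<in>Y. x \<in> ghosts U \<and> y \<in> ghosts U \<and> st_le U x y) \<rparr>"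

text \<open>Identification of the ghost ideal of U/H with N: a ghost class [x] (x in M) is sent
  to gamma(x).\<close>
definition qiota :: "('a, 'b) stm_scheme \<Rightarrow> ('a \<Rightarrow> 'n) \<Rightarrow> 'a set \<Rightarrow> 'n" where
  "qiota U g X = g (SOME x. x \<in> X \<and> x \<in> ghosts U)"

end

theory Submission
  imports Defs
begin

text \<open>The relation \<open>H\<close> is multiplicative because \<open>\<Sigma>\<^sub>0\<close> is closed under multiplication
  up to ghosts and \<open>\<gamma>\<close>-null elements, and it respects supertropical addition because a
  tangible \<open>x\<close> sitting strictly above a ghost of the same \<open>\<gamma>\<close>-value becomes equal to its
  ghost \<open>ex\<close> modulo \<open>H\<close>; so \<open>U/H\<close> is a supertropical semiring with ghost ideal \<open>N\<close>.
  Conversely, any semiring homomorphism \<open>\<beta>\<close> covering \<open>\<gamma>\<close> is forced to be constant on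
  \<open>H\<close>-classes: on \<open>M \<union> \<Sigma>\<^sub>0\<close> it takes the ghost value \<open>\<gamma>(ex)\<close>, and it kills the elements with \<open>\<gamma>(ex) = 0\<close>.\<close>

abbreviation ghost_map :: "('a, 'b) stm_scheme \<Rightarrow> 'a \<Rightarrow> 'a" where
  "ghost_map U x \<equiv> st_mul U (st_e U) x"

locale st_monoid =
  fixes U :: "('a, 'b) stm_scheme"
  assumes supertropical_monoid: "supertropical_monoid U"
begin

lemma stm_closed:
  "st_one U \<in> st_carrier U" "st_zero U \<in> st_carrier U" "st_e U \<in> st_carrier U"
  "x \<in> st_carrier U \<Longrightarrow> y \<in> st_carrier U \<Longrightarrow> st_mul U x y \<in> st_carrier U"
  using supertropical_monoid unfolding supertropical_monoid_def Let_def by auto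

lemma stm_mul_assoc:
  "x \<in> st_carrier U \<Longrightarrow> y \<in> st_carrier U \<Longrightarrow> z \<in> st_carrier U \<Longrightarrow>
    st_mul U (st_mul U x y) z = st_mul U x (st_mul U y z)"
  using supertropical_monoid unfolding supertropical_monoid_def Let_def by blast

lemma stm_mul_comm: "x \<in> st_carrier U \<Longrightarrow> y \<in> st_carrier U \<Longrightarrow> st_mul U x y = st_mul U y x"
  using supertropical_monoid unfolding supertropical_monoid_def Let_def by blast

lemma stm_one_mul: "x \<in> st_carrier U \<Longrightarrow> st_mul U (st_one U) x = x"
  using supertropical_monoid unfolding supertropical_monoid_def Let_def by blast

lemma stm_zero_mul: "x \<in> st_carrier U \<Longrightarrow> st_mul U (st_zero U) x = st_zero U"
  using supertropical_monoid unfolding supertropical_monoid_def Let_def by blast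

lemma stm_e_idem: "st_mul U (st_e U) (st_e U) = st_e U"
  using supertropical_monoid unfolding supertropical_monoid_def Let_def by blast

lemma stm_ghost_map_eq_zero: "x \<in> st_carrier U \<Longrightarrow> ghost_map U x = st_zero U \<Longrightarrow> x = st_zero U"
  using supertropical_monoid unfolding supertropical_monoid_def Let_def by blast

lemma stm_le_refl: "x \<in> ghosts U \<Longrightarrow> st_le U x x"
  using supertropical_monoid unfolding supertropical_monoid_def Let_def by blast

lemma stm_le_antisym: "x \<in> ghosts U \<Longrightarrow> y \<in> ghosts U \<Longrightarrow> st_le U x y \<Longrightarrow> st_le U y x \<Longrightarrow> x = y"
  using supertropical_monoid unfolding supertropical_monoid_def Let_def by blast

lemma stm_le_total: "x \<in> ghosts U \<Longrightarrow> y \<in> ghosts U \<Longrightarrow> st_le U x y \<or> st_le U y x"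
  using supertropical_monoid unfolding supertropical_monoid_def Let_def by blast

lemma stm_le_mul_right:
  "x \<in> ghosts U \<Longrightarrow> y \<in> ghosts U \<Longrightarrow> z \<in> ghosts U \<Longrightarrow> st_le U x y \<Longrightarrow>
    st_le U (st_mul U x z) (st_mul U y z)"
  using supertropical_monoid unfolding supertropical_monoid_def Let_def by blast

lemma ghosts_subset_carrier: "x \<in> ghosts U \<Longrightarrow> x \<in> st_carrier U"
  unfolding ghosts_def using stm_closed by auto

lemma ghost_map_in_ghosts: "x \<in> st_carrier U \<Longrightarrow> ghost_map U x \<in> ghosts U"
  unfolding ghosts_def by auto

lemma ghost_map_ghost: "x \<in> ghosts U \<Longrightarrow> ghost_map U x = x"
  unfolding ghosts_def using stm_mul_assoc[symmetric] stm_e_idem stm_closed by auto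

lemma ghost_map_idem: "x \<in> st_carrier U \<Longrightarrow> ghost_map U (ghost_map U x) = ghost_map U x"
  by (simp add: ghost_map_ghost ghost_map_in_ghosts)

lemma ghosts_mul_right: "x \<in> ghosts U \<Longrightarrow> y \<in> st_carrier U \<Longrightarrow> st_mul U x y \<in> ghosts U"
  by (metis ghost_map_ghost ghost_map_in_ghosts ghosts_subset_carrier stm_closed stm_mul_assoc)

lemma zero_in_ghosts: "st_zero U \<in> ghosts U"
  using ghost_map_in_ghosts[OF stm_closed(2)] stm_mul_comm stm_zero_mul stm_closed by metis

lemma e_in_ghosts: "st_e U \<in> ghosts U"
  using ghost_map_in_ghosts[OF stm_closed(3)] stm_e_idem by simp

lemma ghost_map_mul:
  assumes "x \<in> st_carrier U" "y \<in> st_carrier U"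
  shows "ghost_map U (st_mul U x y) = st_mul U (ghost_map U x) (ghost_map U y)"
proof -
  have "st_mul U (ghost_map U x) (ghost_map U y) = st_mul U x (ghost_map U (ghost_map U y))"
    using assms stm_closed by (metis stm_mul_assoc stm_mul_comm)
  also have "\<dots> = ghost_map U (st_mul U x y)"
    using assms stm_closed by (metis ghost_map_idem stm_mul_assoc stm_mul_comm)
  finally show ?thesis ..
qed

lemma ghost_mul_ghost_map: "a \<in> ghosts U \<Longrightarrow> z \<in> st_carrier U \<Longrightarrow> st_mul U a (ghost_map U z) = st_mul U a z"
  using ghost_map_mul ghost_map_ghost ghosts_mul_right ghosts_subset_carrier by metis

lemma st_add_closed: "x \<in> st_carrier U \<Longrightarrow> y \<in> st_carrier U \<Longrightarrow> st_add U x y \<in> st_carrier U"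
  unfolding st_add_def Let_def using stm_closed by auto

lemma st_add_ghosts:
  "x \<in> ghosts U \<Longrightarrow> y \<in> ghosts U \<Longrightarrow> st_add U x y = (if x = y then x else if st_le U x y then y else x)"
  unfolding st_add_def Let_def using ghost_map_ghost by auto

lemma st_add_ghosts_closed: "x \<in> ghosts U \<Longrightarrow> y \<in> ghosts U \<Longrightarrow> st_add U x y \<in> ghosts U"
  by (simp add: st_add_ghosts)

lemma st_add_same_ghost:
  "ghost_map U x = ghost_map U y \<Longrightarrow> st_add U x y = ghost_map U x"
  unfolding st_add_def Let_def by auto

lemma st_add_lower_ghost:
  assumes "x \<in> st_carrier U" "a \<in> ghosts U" "st_le U a (ghost_map U x)" "a \<noteq> ghost_map U x"
  shows "st_add U x a = x"
  using assms stm_le_antisym ghost_map_in_ghosts unfolding st_add_def Let_def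
  by (auto simp: ghost_map_ghost)

end

definition bs_le :: "('n, 'b) bsr_scheme \<Rightarrow> 'n \<Rightarrow> 'n \<Rightarrow> bool" where
  "bs_le N p q \<longleftrightarrow> bs_add N p q = q"

locale bipotent =
  fixes N :: "('n, 'b) bsr_scheme"
  assumes bipotent_semiring: "bipotent_semiring N"
begin

lemma bs_add_assoc:
  "p \<in> bs_carrier N \<Longrightarrow> q \<in> bs_carrier N \<Longrightarrow> r \<in> bs_carrier N \<Longrightarrow>
    bs_add N (bs_add N p q) r = bs_add N p (bs_add N q r)"
  using bipotent_semiring unfolding bipotent_semiring_def Let_def by blast

lemma bs_add_comm: "p \<in> bs_carrier N \<Longrightarrow> q \<in> bs_carrier N \<Longrightarrow> bs_add N p q = bs_add N q p"
  using bipotent_semiring unfolding bipotent_semiring_def Let_def by blast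

lemma bs_zero_add: "p \<in> bs_carrier N \<Longrightarrow> bs_add N (bs_zero N) p = p"
  using bipotent_semiring unfolding bipotent_semiring_def Let_def by blast

lemma bs_zero_mul: "p \<in> bs_carrier N \<Longrightarrow> bs_mul N (bs_zero N) p = bs_zero N"
  using bipotent_semiring unfolding bipotent_semiring_def Let_def by blast

lemma bs_add_bipotent: "p \<in> bs_carrier N \<Longrightarrow> q \<in> bs_carrier N \<Longrightarrow> bs_add N p q = p \<or> bs_add N p q = q"
  using bipotent_semiring unfolding bipotent_semiring_def Let_def by blast

lemma bs_distrib_right:
  "p \<in> bs_carrier N \<Longrightarrow> q \<in> bs_carrier N \<Longrightarrow> r \<in> bs_carrier N \<Longrightarrow>
    bs_mul N (bs_add N p q) r = bs_add N (bs_mul N p r) (bs_mul N q r)"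
  using bipotent_semiring unfolding bipotent_semiring_def Let_def by blast

lemma bs_le_refl: "p \<in> bs_carrier N \<Longrightarrow> bs_le N p p"
  unfolding bs_le_def using bs_add_bipotent by metis

lemma bs_le_antisym: "p \<in> bs_carrier N \<Longrightarrow> q \<in> bs_carrier N \<Longrightarrow> bs_le N p q \<Longrightarrow> bs_le N q p \<Longrightarrow> p = q"
  unfolding bs_le_def using bs_add_comm by metis

lemma bs_le_trans:
  "p \<in> bs_carrier N \<Longrightarrow> q \<in> bs_carrier N \<Longrightarrow> r \<in> bs_carrier N \<Longrightarrow>
    bs_le N p q \<Longrightarrow> bs_le N q r \<Longrightarrow> bs_le N p r"
  unfolding bs_le_def using bs_add_assoc by metis

lemma bs_le_total: "p \<in> bs_carrier N \<Longrightarrow> q \<in> bs_carrier N \<Longrightarrow> bs_le N p q \<or> bs_le N q p"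
  unfolding bs_le_def using bs_add_bipotent bs_add_comm by metis

lemma bs_le_mul_right:
  "p \<in> bs_carrier N \<Longrightarrow> q \<in> bs_carrier N \<Longrightarrow> r \<in> bs_carrier N \<Longrightarrow>
    bs_le N p q \<Longrightarrow> bs_le N (bs_mul N p r) (bs_mul N q r)"
  unfolding bs_le_def using bs_distrib_right by metis

lemma bs_zero_le: "p \<in> bs_carrier N \<Longrightarrow> bs_le N (bs_zero N) p"
  unfolding bs_le_def using bs_zero_add .

end

locale ghost_covering =
  fixes U :: "'a stm" and N :: "'n bsr" and \<gamma> :: "'a \<Rightarrow> 'n"
  assumes U_semiring: "supertropical_semiring U"
    and N_bipotent: "bipotent_semiring N"
    and \<gamma>_hom: "ghost_hom U N \<gamma>"
    and \<gamma>_surj: "\<gamma> ` ghosts U = bs_carrier N"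
begin

sublocale st_monoid U
  using U_semiring by unfold_locales (simp add: supertropical_semiring_def)

sublocale bipotent N
  using N_bipotent by unfold_locales

lemma st_add_assoc:
  "x \<in> st_carrier U \<Longrightarrow> y \<in> st_carrier U \<Longrightarrow> z \<in> st_carrier U \<Longrightarrow>
    st_add U (st_add U x y) z = st_add U x (st_add U y z)"
  using U_semiring unfolding supertropical_semiring_def by blast

lemma st_mul_add_distrib:
  "x \<in> st_carrier U \<Longrightarrow> y \<in> st_carrier U \<Longrightarrow> z \<in> st_carrier U \<Longrightarrow>
    st_mul U x (st_add U y z) = st_add U (st_mul U x y) (st_mul U x z)"
  using U_semiring unfolding supertropical_semiring_def by blast

abbreviation "H \<equiv> Hrel U N \<gamma>"
abbreviation "Q \<equiv> quot_stm U H"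
abbreviation "cls x \<equiv> H `` {x}"

lemma \<gamma>_closed: "a \<in> ghosts U \<Longrightarrow> \<gamma> a \<in> bs_carrier N"
  and \<gamma>_zero: "\<gamma> (st_zero U) = bs_zero N"
  and \<gamma>_e: "\<gamma> (st_e U) = bs_one N"
  and \<gamma>_mul: "a \<in> ghosts U \<Longrightarrow> b \<in> ghosts U \<Longrightarrow> \<gamma> (st_mul U a b) = bs_mul N (\<gamma> a) (\<gamma> b)"
  and \<gamma>_add: "a \<in> ghosts U \<Longrightarrow> b \<in> ghosts U \<Longrightarrow> \<gamma> (st_add U a b) = bs_add N (\<gamma> a) (\<gamma> b)"
  using \<gamma>_hom unfolding ghost_hom_def by auto

lemma \<gamma>_mono: "a \<in> ghosts U \<Longrightarrow> b \<in> ghosts U \<Longrightarrow> st_le U a b \<Longrightarrow> bs_le N (\<gamma> a) (\<gamma> b)"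
  unfolding bs_le_def using \<gamma>_add st_add_ghosts by metis

lemma \<gamma>_le_reflect:
  "a \<in> ghosts U \<Longrightarrow> b \<in> ghosts U \<Longrightarrow> \<gamma> a \<noteq> \<gamma> b \<Longrightarrow> bs_le N (\<gamma> a) (\<gamma> b) \<Longrightarrow> st_le U a b"
  using \<gamma>_mono stm_le_total bs_le_antisym \<gamma>_closed by metis

lemma \<gamma>_ghost_map_mul:
  "x \<in> st_carrier U \<Longrightarrow> y \<in> st_carrier U \<Longrightarrow>
    \<gamma> (ghost_map U (st_mul U x y)) = bs_mul N (\<gamma> (ghost_map U x)) (\<gamma> (ghost_map U y))"
  by (simp add: ghost_map_mul \<gamma>_mul ghost_map_in_ghosts)

lemma mem_Hrel_iff:
  "(x1, x2) \<in> H \<longleftrightarrow> x1 \<in> st_carrier U \<and> x2 \<in> st_carrier U \<and>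
     \<gamma> (ghost_map U x1) = \<gamma> (ghost_map U x2) \<and>
     (x1 = x2 \<or> (x1 \<in> ghosts U \<union> Sigma0 U N \<gamma> \<and> x2 \<in> ghosts U \<union> Sigma0 U N \<gamma>) \<or>
      \<gamma> (ghost_map U x1) = bs_zero N)"
  unfolding Hrel_def by auto

lemma equiv_Hrel: "equiv (st_carrier U) H"
proof (rule equivI)
  show "refl_on (st_carrier U) H" unfolding refl_on_def by (auto simp: mem_Hrel_iff)
  show "sym H" unfolding sym_def mem_Hrel_iff by metis
  show "trans H" unfolding trans_def mem_Hrel_iff by metis
  show "H \<subseteq> st_carrier U \<times> st_carrier U" by (auto simp: mem_Hrel_iff)
qed

text \<open>If \<open>x\<close> has the witness \<open>a < ex\<close>, then \<open>az \<le> exz\<close> is a witness for \<open>xz\<close>, unless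
  \<open>az = exz\<close>; in that case distributivity applied to \<open>x = x + a\<close> forces \<open>xz = exz\<close>.\<close>
lemma Sigma0_mul:
  assumes x: "x \<in> Sigma0 U N \<gamma>" and z: "z \<in> st_carrier U"
  shows "st_mul U x z \<in> ghosts U \<union> Sigma0 U N \<gamma> \<or> \<gamma> (ghost_map U (st_mul U x z)) = bs_zero N"
proof -
  from x obtain a where xC: "x \<in> st_carrier U" and a: "a \<in> ghosts U"
    and le: "st_le U a (ghost_map U x)" and ne: "a \<noteq> ghost_map U x"
    and \<gamma>a: "\<gamma> a = \<gamma> (ghost_map U x)"
    unfolding Sigma0_def by auto
  define b where "b = st_mul U a (ghost_map U z)"
  define G where "G = ghost_map U (st_mul U x z)"
  have ez: "ghost_map U z \<in> ghosts U" and ex: "ghost_map U x \<in> ghosts U"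
    using xC z ghost_map_in_ghosts by auto
  have b: "b \<in> ghosts U" unfolding b_def using a ez ghosts_mul_right ghosts_subset_carrier by blast
  have G: "G = st_mul U (ghost_map U x) (ghost_map U z)" unfolding G_def using ghost_map_mul xC z by simp
  show ?thesis
  proof (cases "b = G")
    case True
    have "st_mul U z x = st_mul U z (st_add U x a)" using st_add_lower_ghost[OF xC a le ne] by simp
    also have "\<dots> = st_add U (st_mul U z x) (st_mul U z a)"
      using st_mul_add_distrib z xC a ghosts_subset_carrier by blast
    also have "\<dots> = G"
    proof (rule trans[OF st_add_same_ghost])
      have "st_mul U z a = b"
        unfolding b_def using ghost_mul_ghost_map[OF a z] stm_mul_comm z a ghosts_subset_carrier by metis
      then show "ghost_map U (st_mul U z x) = ghost_map U (st_mul U z a)"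
        using True b ghost_map_ghost stm_mul_comm xC z unfolding G_def by metis
      show "ghost_map U (st_mul U z x) = G" unfolding G_def using stm_mul_comm xC z by metis
    qed
    finally have "st_mul U x z = G" using stm_mul_comm xC z by metis
    then show ?thesis unfolding G_def using ghost_map_in_ghosts stm_closed xC z by (metis UnI1)
  next
    case False
    have "st_le U b G" unfolding b_def G using stm_le_mul_right[OF a ex ez le] .
    moreover have "\<gamma> b = \<gamma> G" unfolding b_def G using \<gamma>_mul a ez ex \<gamma>a by simp
    ultimately show ?thesis
      using False b xC z stm_closed unfolding G_def Sigma0_def by auto
  qed
qed

lemma Hrel_mul_right:
  assumes h: "(x1, x2) \<in> H" and z: "z \<in> st_carrier U"
  shows "(st_mul U x1 z, st_mul U x2 z) \<in> H"
proof -
  have x1: "x1 \<in> st_carrier U" and x2: "x2 \<in> st_carrier U"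
    and \<gamma>eq: "\<gamma> (ghost_map U x1) = \<gamma> (ghost_map U x2)"
    using h mem_Hrel_iff by auto
  have \<gamma>eq': "\<gamma> (ghost_map U (st_mul U x1 z)) = \<gamma> (ghost_map U (st_mul U x2 z))"
    using \<gamma>_ghost_map_mul x1 x2 z \<gamma>eq by simp
  have C: "st_mul U x1 z \<in> st_carrier U" "st_mul U x2 z \<in> st_carrier U" using stm_closed x1 x2 z by auto
  have closed: "st_mul U x z \<in> ghosts U \<union> Sigma0 U N \<gamma> \<or> \<gamma> (ghost_map U (st_mul U x z)) = bs_zero N"
    if "x \<in> ghosts U \<union> Sigma0 U N \<gamma>" for x
    using that Sigma0_mul[OF _ z] ghosts_mul_right z by auto
  from h consider "x1 = x2" | "x1 \<in> ghosts U \<union> Sigma0 U N \<gamma>" "x2 \<in> ghosts U \<union> Sigma0 U N \<gamma>"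
    | "\<gamma> (ghost_map U x1) = bs_zero N"
    using mem_Hrel_iff by auto
  then show ?thesis
  proof cases
    case 1
    then show ?thesis using C mem_Hrel_iff by auto
  next
    case 2
    then show ?thesis using closed[of x1] closed[of x2] \<gamma>eq' C mem_Hrel_iff by metis
  next
    case 3
    then have "\<gamma> (ghost_map U (st_mul U x1 z)) = bs_zero N"
      using \<gamma>_ghost_map_mul x1 z bs_zero_mul \<gamma>_closed ghost_map_in_ghosts by simp
    then show ?thesis using \<gamma>eq' C mem_Hrel_iff by metis
  qed
qed

lemma Hrel_mul: "(x1, x2) \<in> H \<Longrightarrow> (y1, y2) \<in> H \<Longrightarrow> (st_mul U x1 y1, st_mul U x2 y2) \<in> H"
  using Hrel_mul_right mem_Hrel_iff stm_mul_comm equiv_Hrel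
  unfolding equiv_def trans_def by metis


lemma cls_eq_iff: "x \<in> st_carrier U \<Longrightarrow> y \<in> st_carrier U \<Longrightarrow> cls x = cls y \<longleftrightarrow> (x, y) \<in> H"
  using equiv_class_eq_iff[OF equiv_Hrel] by auto

lemma cls_self: "x \<in> st_carrier U \<Longrightarrow> x \<in> cls x"
  using equiv_class_self[OF equiv_Hrel] .

lemma quot_carrier: "st_carrier Q = st_carrier U // H"
  and quot_one: "st_one Q = cls (st_one U)"
  and quot_zero: "st_zero Q = cls (st_zero U)"
  and quot_e: "st_e Q = cls (st_e U)"
  by (simp_all add: quot_stm_def)

lemma quot_mul_cls:
  assumes x: "x \<in> st_carrier U" and y: "y \<in> st_carrier U"
  shows "st_mul Q (cls x) (cls y) = cls (st_mul U x y)"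
proof -
  have "(x, SOME x'. x' \<in> cls x) \<in> H" "(y, SOME y'. y' \<in> cls y) \<in> H"
    using someI[of "\<lambda>x'. x' \<in> cls x", OF cls_self[OF x]]
      someI[of "\<lambda>y'. y' \<in> cls y", OF cls_self[OF y]] by auto
  then have "(st_mul U x y, st_mul U (SOME x'. x' \<in> cls x) (SOME y'. y' \<in> cls y)) \<in> H"
    by (rule Hrel_mul)
  then show ?thesis
    unfolding quot_stm_def using cls_eq_iff mem_Hrel_iff by (simp only: stm.simps) metis
qed

lemma ghosts_quot: "ghosts Q = cls ` ghosts U"
proof -
  have "ghosts Q = (\<lambda>X. st_mul Q (cls (st_e U)) X) ` (st_carrier U // H)"
    unfolding ghosts_def quot_carrier quot_e ..
  also have "\<dots> = (\<lambda>x. st_mul Q (cls (st_e U)) (cls x)) ` st_carrier U"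
    unfolding quotient_def by auto
  also have "\<dots> = (\<lambda>x. cls (ghost_map U x)) ` st_carrier U"
    using quot_mul_cls stm_closed by simp
  also have "\<dots> = cls ` ghosts U"
    unfolding ghosts_def by (simp add: image_image)
  finally show ?thesis .
qed

lemma cls_ghost_eq_iff: "a \<in> ghosts U \<Longrightarrow> b \<in> ghosts U \<Longrightarrow> cls a = cls b \<longleftrightarrow> \<gamma> a = \<gamma> b"
  using cls_eq_iff mem_Hrel_iff ghost_map_ghost ghosts_subset_carrier by auto

lemma \<gamma>_ghost_in_cls: "a \<in> ghosts U \<Longrightarrow> x \<in> cls a \<Longrightarrow> x \<in> ghosts U \<Longrightarrow> \<gamma> x = \<gamma> a"
  using mem_Hrel_iff ghost_map_ghost by auto

lemma quot_le_cls_iff: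
  assumes a: "a \<in> ghosts U" and b: "b \<in> ghosts U"
  shows "st_le Q (cls a) (cls b) \<longleftrightarrow> bs_le N (\<gamma> a) (\<gamma> b)"
proof
  assume "st_le Q (cls a) (cls b)"
  then obtain x y where "x \<in> cls a" "y \<in> cls b" "x \<in> ghosts U" "y \<in> ghosts U" "st_le U x y"
    by (auto simp: quot_stm_def)
  then show "bs_le N (\<gamma> a) (\<gamma> b)" using \<gamma>_ghost_in_cls a b \<gamma>_mono by metis
next
  assume le: "bs_le N (\<gamma> a) (\<gamma> b)"
  have "a \<in> cls a" "b \<in> cls b" using cls_self a b ghosts_subset_carrier by auto
  moreover have "\<exists>a'\<in>cls a. a' \<in> ghosts U \<and> st_le U a' b"
  proof (cases "\<gamma> a = \<gamma> b")
    case True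
    then have "b \<in> cls a" using cls_ghost_eq_iff a b cls_self ghosts_subset_carrier by metis
    then show ?thesis using b stm_le_refl by blast
  next
    case False
    then show ?thesis using \<open>a \<in> cls a\<close> a b le \<gamma>_le_reflect by blast
  qed
  ultimately show "st_le Q (cls a) (cls b)"
    unfolding quot_stm_def using b by (simp only: stm.simps) blast
qed

text \<open>Such an \<open>x\<close> lies in \<open>M \<union> \<Sigma>\<^sub>0\<close> or in the zero class, and so does its ghost.\<close>
lemma Hrel_ghost_map:
  assumes x: "x \<in> st_carrier U" and a: "a \<in> ghosts U" and le: "st_le U a (ghost_map U x)"
    and ne: "a \<noteq> ghost_map U x" and \<gamma>a: "\<gamma> a = \<gamma> (ghost_map U x)"
  shows "(ghost_map U x, x) \<in> H"
proof -
  have "x \<in> ghosts U \<union> Sigma0 U N \<gamma> \<or> \<gamma> (ghost_map U x) = bs_zero N"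
    using x a le ne \<gamma>a unfolding Sigma0_def by auto
  then show ?thesis
    using x ghost_map_in_ghosts ghost_map_idem ghosts_subset_carrier mem_Hrel_iff by auto
qed

lemma quot_add_cls:
  assumes x: "x \<in> st_carrier U" and y: "y \<in> st_carrier U"
  shows "st_add Q (cls x) (cls y) = cls (st_add U x y)"
proof -
  define A B where "A = ghost_map U x" and "B = ghost_map U y"
  have A: "A \<in> ghosts U" and B: "B \<in> ghosts U" unfolding A_def B_def using x y ghost_map_in_ghosts by auto
  have lhs: "st_add Q (cls x) (cls y) =
      (if cls A = cls B then cls A else if st_le Q (cls A) (cls B) then cls y else cls x)"
    unfolding st_add_def Let_def quot_e A_def B_def using quot_mul_cls x y stm_closed by simp
  have rhs: "st_add U x y = (if A = B then A else if st_le U A B then y else x)"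
    unfolding st_add_def Let_def A_def B_def by simp
  show ?thesis
  proof (cases "\<gamma> A = \<gamma> B")
    case True
    then have AB: "cls A = cls B" using cls_ghost_eq_iff A B by auto
    consider "A = B" | "A \<noteq> B" "st_le U A B" | "A \<noteq> B" "st_le U B A" "\<not> st_le U A B"
      using stm_le_total A B by blast
    then show ?thesis
    proof cases
      case 1
      then show ?thesis using lhs rhs by simp
    next
      case 2
      then have "cls y = cls B"
        using Hrel_ghost_map[OF y A] True cls_eq_iff y B ghosts_subset_carrier unfolding B_def by metis
      then show ?thesis using lhs rhs AB 2 by simp
    next
      case 3
      then have "cls x = cls A"
        using Hrel_ghost_map[OF x B] True cls_eq_iff x A ghosts_subset_carrier unfolding A_def
        by metis
      then show ?thesis using lhs rhs AB 3 by simp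
    qed
  next
    case False
    then have "cls A \<noteq> cls B" "A \<noteq> B" using cls_ghost_eq_iff A B by auto
    moreover have "st_le Q (cls A) (cls B) \<longleftrightarrow> st_le U A B"
      using quot_le_cls_iff[OF A B] \<gamma>_mono[OF A B] \<gamma>_le_reflect[OF A B False] by auto
    ultimately show ?thesis using lhs rhs by simp
  qed
qed

lemma cls_eq_zero_iff:
  assumes x: "x \<in> st_carrier U"
  shows "cls x = cls (st_zero U) \<longleftrightarrow> \<gamma> (ghost_map U x) = bs_zero N"
proof -
  have "\<gamma> (ghost_map U (st_zero U)) = bs_zero N"
    using ghost_map_ghost zero_in_ghosts \<gamma>_zero by simp
  then show ?thesis using cls_eq_iff[OF x] stm_closed x mem_Hrel_iff by auto
qed

lemma qiota_cls:
  assumes a: "a \<in> ghosts U"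
  shows "qiota U \<gamma> (cls a) = \<gamma> a"
proof -
  have "a \<in> cls a" using cls_self ghosts_subset_carrier a by blast
  then have "(SOME x. x \<in> cls a \<and> x \<in> ghosts U) \<in> cls a \<inter> ghosts U"
    using someI[of "\<lambda>x. x \<in> cls a \<and> x \<in> ghosts U" a] a by blast
  then show ?thesis unfolding qiota_def using \<gamma>_ghost_in_cls a by blast
qed


lemma ghosts_quotE:
  assumes "X \<in> ghosts Q"
  obtains a where "a \<in> ghosts U" "X = cls a"
  using assms unfolding ghosts_quot by blast

lemma cls_in_quot_carrier: "x \<in> st_carrier U \<Longrightarrow> cls x \<in> st_carrier Q"
  unfolding quot_carrier by (rule quotientI)

lemma ball_quot_carrier: "(\<forall>X\<in>st_carrier Q. P X) \<longleftrightarrow> (\<forall>x\<in>st_carrier U. P (cls x))"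
  unfolding quot_carrier quotient_def by blast

lemma quot_closed:
  "st_one Q \<in> st_carrier Q" "st_zero Q \<in> st_carrier Q" "st_e Q \<in> st_carrier Q"
  "\<forall>X\<in>st_carrier Q. \<forall>Y\<in>st_carrier Q. st_mul Q X Y \<in> st_carrier Q"
  unfolding quot_one quot_zero quot_e ball_quot_carrier
  by (simp_all add: cls_in_quot_carrier quot_mul_cls stm_closed)

lemma quot_mul_assoc:
  "\<forall>X\<in>st_carrier Q. \<forall>Y\<in>st_carrier Q. \<forall>Z\<in>st_carrier Q.
    st_mul Q (st_mul Q X Y) Z = st_mul Q X (st_mul Q Y Z)"
  unfolding ball_quot_carrier by (simp add: quot_mul_cls stm_closed stm_mul_assoc)

lemma quot_mul_comm: "\<forall>X\<in>st_carrier Q. \<forall>Y\<in>st_carrier Q. st_mul Q X Y = st_mul Q Y X"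
  unfolding ball_quot_carrier using stm_mul_comm by (simp add: quot_mul_cls)

lemma quot_one_mul: "\<forall>X\<in>st_carrier Q. st_mul Q (st_one Q) X = X"
  and quot_zero_mul: "\<forall>X\<in>st_carrier Q. st_mul Q (st_zero Q) X = st_zero Q"
  and quot_e_idem: "st_mul Q (st_e Q) (st_e Q) = st_e Q"
  unfolding ball_quot_carrier quot_one quot_zero quot_e
  by (simp_all add: quot_mul_cls stm_closed stm_one_mul stm_zero_mul stm_e_idem)

lemma quot_ghost_map_eq_zero:
  "\<forall>X\<in>st_carrier Q. st_mul Q (st_e Q) X = st_zero Q \<longrightarrow> X = st_zero Q"
  unfolding ball_quot_carrier
proof (intro ballI impI)
  fix x assume x: "x \<in> st_carrier U" and "st_mul Q (st_e Q) (cls x) = st_zero Q"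
  then have "cls (ghost_map U x) = cls (st_zero U)"
    using quot_mul_cls stm_closed unfolding quot_e quot_zero by simp
  then have "\<gamma> (ghost_map U x) = bs_zero N"
    using cls_eq_zero_iff ghost_map_idem stm_closed x by metis
  then show "cls x = st_zero Q" unfolding quot_zero using cls_eq_zero_iff x by blast
qed

lemma quot_ghosts_mul: "X \<in> ghosts Q \<Longrightarrow> Y \<in> ghosts Q \<Longrightarrow> st_mul Q X Y \<in> ghosts Q"
  unfolding ghosts_quot using quot_mul_cls ghosts_mul_right ghosts_subset_carrier by auto

lemma qiota_mul_add:
  assumes "X \<in> ghosts Q" "Y \<in> ghosts Q"
  shows "qiota U \<gamma> (st_mul Q X Y) = bs_mul N (qiota U \<gamma> X) (qiota U \<gamma> Y)"
    and "qiota U \<gamma> (st_add Q X Y) = bs_add N (qiota U \<gamma> X) (qiota U \<gamma> Y)"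
  using assms
  by (auto elim!: ghosts_quotE simp: quot_mul_cls quot_add_cls qiota_cls \<gamma>_mul \<gamma>_add
      ghosts_subset_carrier ghosts_mul_right st_add_ghosts_closed)

lemma qiota_closed: "X \<in> ghosts Q \<Longrightarrow> qiota U \<gamma> X \<in> bs_carrier N"
  by (metis ghosts_quotE qiota_cls \<gamma>_closed)

lemma qiota_inj: "X \<in> ghosts Q \<Longrightarrow> Y \<in> ghosts Q \<Longrightarrow> qiota U \<gamma> X = qiota U \<gamma> Y \<Longrightarrow> X = Y"
  by (metis ghosts_quotE qiota_cls cls_ghost_eq_iff)

lemma quot_le_iff:
  "X \<in> ghosts Q \<Longrightarrow> Y \<in> ghosts Q \<Longrightarrow> st_le Q X Y \<longleftrightarrow> bs_le N (qiota U \<gamma> X) (qiota U \<gamma> Y)"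
  by (metis ghosts_quotE qiota_cls quot_le_cls_iff)

lemma qiota_zero: "qiota U \<gamma> (st_zero Q) = bs_zero N"
  unfolding quot_zero using qiota_cls zero_in_ghosts \<gamma>_zero by simp

lemma zero_in_quot_ghosts: "st_zero Q \<in> ghosts Q"
  unfolding ghosts_quot quot_zero using zero_in_ghosts by blast

lemma quot_supertropical_monoid: "supertropical_monoid Q"
proof -
  have "\<forall>X\<in>ghosts Q. st_le Q X X"
    by (simp add: quot_le_iff bs_le_refl qiota_closed)
  moreover have "\<forall>X\<in>ghosts Q. \<forall>Y\<in>ghosts Q. st_le Q X Y \<and> st_le Q Y X \<longrightarrow> X = Y"
  proof (intro ballI impI)
    fix X Y assume X: "X \<in> ghosts Q" and Y: "Y \<in> ghosts Q" and "st_le Q X Y \<and> st_le Q Y X"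
    then have "qiota U \<gamma> X = qiota U \<gamma> Y"
      using bs_le_antisym qiota_closed quot_le_iff by blast
    then show "X = Y" using qiota_inj X Y by blast
  qed
  moreover have "\<forall>X\<in>ghosts Q. \<forall>Y\<in>ghosts Q. \<forall>Z\<in>ghosts Q.
      st_le Q X Y \<and> st_le Q Y Z \<longrightarrow> st_le Q X Z"
    using bs_le_trans qiota_closed by (simp add: quot_le_iff) blast
  moreover have "\<forall>X\<in>ghosts Q. \<forall>Y\<in>ghosts Q. st_le Q X Y \<or> st_le Q Y X"
    by (simp add: quot_le_iff bs_le_total qiota_closed)
  moreover have "\<forall>X\<in>ghosts Q. \<forall>Y\<in>ghosts Q. \<forall>Z\<in>ghosts Q.
      st_le Q X Y \<longrightarrow> st_le Q (st_mul Q X Z) (st_mul Q Y Z)"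
    by (simp add: quot_le_iff quot_ghosts_mul qiota_mul_add bs_le_mul_right qiota_closed)
  moreover have "\<forall>X\<in>ghosts Q. st_le Q (st_zero Q) X"
    by (simp add: quot_le_iff zero_in_quot_ghosts qiota_zero bs_zero_le qiota_closed)
  ultimately show ?thesis
    using quot_closed quot_mul_assoc quot_mul_comm quot_one_mul quot_zero_mul quot_e_idem
      quot_ghost_map_eq_zero
    unfolding supertropical_monoid_def Let_def by (intro conjI) assumption+
qed

lemma quot_supertropical_semiring: "supertropical_semiring Q"
proof -
  have "\<forall>X\<in>st_carrier Q. \<forall>Y\<in>st_carrier Q. \<forall>Z\<in>st_carrier Q.
      st_add Q (st_add Q X Y) Z = st_add Q X (st_add Q Y Z)"
    by (simp add: ball_quot_carrier quot_add_cls st_add_closed st_add_assoc)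
  moreover have "\<forall>X\<in>st_carrier Q. \<forall>Y\<in>st_carrier Q. \<forall>Z\<in>st_carrier Q.
      st_mul Q X (st_add Q Y Z) = st_add Q (st_mul Q X Y) (st_mul Q X Z)"
    by (simp add: ball_quot_carrier quot_add_cls quot_mul_cls st_add_closed stm_closed st_mul_add_distrib)
  ultimately show ?thesis
    unfolding supertropical_semiring_def using quot_supertropical_monoid by blast
qed

lemma qiota_bij: "bij_betw (qiota U \<gamma>) (ghosts Q) (bs_carrier N)"
  unfolding bij_betw_def
proof
  show "inj_on (qiota U \<gamma>) (ghosts Q)"
    using qiota_inj by (rule inj_onI)
  show "qiota U \<gamma> ` ghosts Q = bs_carrier N"
    unfolding ghosts_quot image_image using qiota_cls \<gamma>_surj by (simp cong: image_cong)
qed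

lemma proj_semiring_hom: "st_semiring_hom U Q (proj H)"
  unfolding st_semiring_hom_def proj_def quot_carrier quot_zero quot_one
  using quot_mul_cls quot_add_cls by (auto intro: quotientI)

lemma proj_covers: "x \<in> ghosts U \<Longrightarrow> proj H x \<in> ghosts Q \<and> qiota U \<gamma> (proj H x) = \<gamma> x"
  unfolding proj_def ghosts_quot using qiota_cls by auto

end

locale covering_hom = ghost_covering U N \<gamma> for U :: "'a stm" and N :: "'n bsr" and \<gamma> +
  fixes W :: "'n stm" and \<beta> :: "'a \<Rightarrow> 'n"
  assumes W_semiring: "supertropical_semiring W"
    and W_ghosts: "ghost_ideal_is W N"
    and \<beta>_hom: "st_semiring_hom U W \<beta>"
    and \<beta>_covers: "covers U W \<beta> \<gamma>"
begin

sublocale W: st_monoid W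
  using W_semiring by unfold_locales (simp add: supertropical_semiring_def)

lemma \<beta>_closed: "x \<in> st_carrier U \<Longrightarrow> \<beta> x \<in> st_carrier W"
  and \<beta>_zero: "\<beta> (st_zero U) = st_zero W"
  and \<beta>_one: "\<beta> (st_one U) = st_one W"
  and \<beta>_mul: "x \<in> st_carrier U \<Longrightarrow> y \<in> st_carrier U \<Longrightarrow> \<beta> (st_mul U x y) = st_mul W (\<beta> x) (\<beta> y)"
  and \<beta>_add: "x \<in> st_carrier U \<Longrightarrow> y \<in> st_carrier U \<Longrightarrow> \<beta> (st_add U x y) = st_add W (\<beta> x) (\<beta> y)"
  using \<beta>_hom unfolding st_semiring_hom_def by auto

lemma \<beta>_ghost: "a \<in> ghosts U \<Longrightarrow> \<beta> a = \<gamma> a \<and> \<beta> a \<in> ghosts W"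
  using \<beta>_covers unfolding covers_def by auto

lemma ghost_map_\<beta>: "x \<in> st_carrier U \<Longrightarrow> ghost_map W (\<beta> x) = \<gamma> (ghost_map U x)"
proof -
  have "\<beta> (st_e U) = st_e W"
    using \<beta>_ghost[OF e_in_ghosts] \<gamma>_e W_ghosts unfolding ghost_ideal_is_def by simp
  then show "x \<in> st_carrier U \<Longrightarrow> ?thesis"
    using \<beta>_mul[of "st_e U" x] \<beta>_ghost ghost_map_in_ghosts stm_closed by simp
qed

text \<open>On \<open>\<Sigma>\<^sub>0\<close> the value of \<open>\<beta>\<close> is forced to be a ghost: the witness \<open>a < ex\<close> is absorbed,
  \<open>x = x + a\<close>, while in \<open>W\<close> the images of \<open>x\<close> and \<open>a\<close> have the same ghost \<open>\<gamma>(ex)\<close>.\<close>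
lemma \<beta>_Sigma0: "x \<in> ghosts U \<union> Sigma0 U N \<gamma> \<Longrightarrow> \<beta> x = \<gamma> (ghost_map U x)"
proof (cases "x \<in> ghosts U")
  case True
  then show ?thesis using \<beta>_ghost ghost_map_ghost by simp
next
  case False
  assume "x \<in> ghosts U \<union> Sigma0 U N \<gamma>"
  with False obtain a where x: "x \<in> st_carrier U" and a: "a \<in> ghosts U"
    and le: "st_le U a (ghost_map U x)" and ne: "a \<noteq> ghost_map U x"
    and \<gamma>a: "\<gamma> a = \<gamma> (ghost_map U x)"
    unfolding Sigma0_def by auto
  have "\<beta> x = st_add W (\<beta> x) (\<beta> a)"
    using \<beta>_add[OF x] st_add_lower_ghost[OF x a le ne] ghosts_subset_carrier a by metis
  also have "\<dots> = ghost_map W (\<beta> x)"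
    using ghost_map_\<beta> x a ghosts_subset_carrier ghost_map_ghost \<gamma>a
    by (intro W.st_add_same_ghost) simp
  also have "\<dots> = \<gamma> (ghost_map U x)" using ghost_map_\<beta> x by simp
  finally show ?thesis .
qed

lemma \<beta>_zero_class: "x \<in> st_carrier U \<Longrightarrow> \<gamma> (ghost_map U x) = bs_zero N \<Longrightarrow> \<beta> x = st_zero W"
  using W.stm_ghost_map_eq_zero \<beta>_closed ghost_map_\<beta> W_ghosts unfolding ghost_ideal_is_def by simp

lemma \<beta>_respects_Hrel: "(x1, x2) \<in> H \<Longrightarrow> \<beta> x1 = \<beta> x2"
  using mem_Hrel_iff \<beta>_Sigma0 \<beta>_zero_class by metis

lemma \<beta>_factors_uniquely:
  "\<exists>\<eta>. st_semiring_hom Q W \<eta> \<and> covers Q W \<eta> (qiota U \<gamma>) \<and>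
       (\<forall>x\<in>st_carrier U. \<beta> x = \<eta> (proj H x)) \<and>
       (\<forall>\<eta>'. st_semiring_hom Q W \<eta>' \<and> covers Q W \<eta>' (qiota U \<gamma>) \<and>
              (\<forall>x\<in>st_carrier U. \<beta> x = \<eta>' (proj H x)) \<longrightarrow>
              (\<forall>X\<in>st_carrier Q. \<eta>' X = \<eta> X))"
proof -
  define \<eta> where "\<eta> X = \<beta> (SOME x. x \<in> X)" for X
  have \<eta>_cls: "\<eta> (cls x) = \<beta> x" if "x \<in> st_carrier U" for x
    unfolding \<eta>_def using someI[of "\<lambda>x'. x' \<in> cls x", OF cls_self[OF that]] \<beta>_respects_Hrel by simp
  have "st_semiring_hom Q W \<eta>"
    unfolding st_semiring_hom_def ball_quot_carrier quot_zero quot_one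
    by (simp add: \<eta>_cls quot_mul_cls quot_add_cls stm_closed st_add_closed
        \<beta>_closed \<beta>_zero \<beta>_one \<beta>_mul \<beta>_add)
  moreover have "covers Q W \<eta> (qiota U \<gamma>)"
    unfolding covers_def ghosts_quot
  proof
    fix X assume "X \<in> cls ` ghosts U"
    then obtain a where a: "a \<in> ghosts U" and X: "X = cls a" by blast
    show "\<eta> X \<in> ghosts W \<and> \<eta> X = qiota U \<gamma> X"
      using \<eta>_cls[OF ghosts_subset_carrier[OF a]] \<beta>_ghost[OF a] qiota_cls[OF a] X by auto
  qed
  moreover have "\<forall>x\<in>st_carrier U. \<beta> x = \<eta> (proj H x)"
    unfolding proj_def using \<eta>_cls by simp
  moreover have "\<forall>X\<in>st_carrier Q. \<eta>' X = \<eta> X"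
    if "\<forall>x\<in>st_carrier U. \<beta> x = \<eta>' (proj H x)" for \<eta>'
    using that \<eta>_cls unfolding ball_quot_carrier proj_def by simp
  ultimately show ?thesis by blast
qed

end

theorem theorem5p13:
  fixes U :: "'a stm" and N :: "'n bsr" and \<gamma> :: "'a \<Rightarrow> 'n"
  assumes "supertropical_semiring U"
    and "bipotent_semiring N"
    and "ghost_hom U N \<gamma>"
    and "\<gamma> ` ghosts U = bs_carrier N"
  defines "H \<equiv> Hrel U N \<gamma>"
    and "Q \<equiv> quot_stm U (Hrel U N \<gamma>)"
    and "\<iota> \<equiv> qiota U \<gamma>"
  shows "supertropical_semiring Q \<and>
    bij_betw \<iota> (ghosts Q) (bs_carrier N) \<and>
    (\<forall>X\<in>ghosts Q. \<forall>Y\<in>ghosts Q.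
        \<iota> (st_mul Q X Y) = bs_mul N (\<iota> X) (\<iota> Y) \<and>
        \<iota> (st_add Q X Y) = bs_add N (\<iota> X) (\<iota> Y)) \<and>
    st_semiring_hom U Q (proj H) \<and>
    (\<forall>x\<in>ghosts U. proj H x \<in> ghosts Q \<and> \<iota> (proj H x) = \<gamma> x) \<and>
    (\<forall>(W :: 'n stm) \<beta>.
       supertropical_semiring W \<and> ghost_ideal_is W N \<and>
       st_semiring_hom U W \<beta> \<and> covers U W \<beta> \<gamma> \<longrightarrow>
       (\<exists>\<eta>. st_semiring_hom Q W \<eta> \<and> covers Q W \<eta> \<iota> \<and>
            (\<forall>x\<in>st_carrier U. \<beta> x = \<eta> (proj H x)) \<and>
            (\<forall>\<eta>'. st_semiring_hom Q W \<eta>' \<and> covers Q W \<eta>' \<iota> \<and>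
                   (\<forall>x\<in>st_carrier U. \<beta> x = \<eta>' (proj H x)) \<longrightarrow>
                   (\<forall>X\<in>st_carrier Q. \<eta>' X = \<eta> X))))"
proof -
  interpret ghost_covering U N \<gamma>
    using assms(1-4) by unfold_locales
  have "covering_hom U N \<gamma> W \<beta>"
    if "supertropical_semiring W \<and> ghost_ideal_is W N \<and> st_semiring_hom U W \<beta> \<and> covers U W \<beta> \<gamma>"
    for W :: "'n stm" and \<beta>
    using that by unfold_locales auto
  then show ?thesis
    unfolding H_def Q_def \<iota>_def
    using quot_supertropical_semiring qiota_bij qiota_mul_add proj_semiring_hom proj_covers
      covering_hom.\<beta>_factors_uniquely
    by blast
qed

end
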